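(* There exists a simple tree $T$ such that $\mathcal{D}(\Delta_T)\ne\mathcal{D}(d_T(Q))$ while $\mathcal{D}(\Delta_T^{1/2})=\mathcal{D}(d_T^{1/2}(Q))$.
   Context: A simple graph $G=(\mathscr{V},\mathscr{E})$ has a countable vertex set $\mathscr{V}$, symmetric edge weights $\mathscr{E}:\mathscr{V}\times\mathscr{V}\to\{0,1\}$, zero magnetic phase and vertex weight $m\equiv1$; it is assumed locally finite, connected and without loops. A tree is a graph in which removing any single edge disconnects it. $\Delta_T$ is the Friedrichs extension in $\ell^2(\mathscr{V})$ of the form $\frac12\sum_{x,y}\mathscr{E}(x,y)|f(x)-f(y)|^2$ on finitely supported functions; $d_T(x)=\sum_y\mathscr{E}(x,y)$ and $d_T(Q)$ is multiplication by it. *)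

theory Defs
  imports "HOL-Analysis.Analysis"
begin

text \<open>Graphs: vertex set V (a subset of nat, hence countable), edge relation E
  (E x y means the edge weight is 1).\<close>

definition graph_connected :: "nat set \<Rightarrow> (nat \<Rightarrow> nat \<Rightarrow> bool) \<Rightarrow> bool" where
  "graph_connected V E \<longleftrightarrow> V \<noteq> {} \<and> (\<forall>x\<in>V. \<forall>y\<in>V. E\<^sup>*\<^sup>* x y)"

definition simple_graph :: "nat set \<Rightarrow> (nat \<Rightarrow> nat \<Rightarrow> bool) \<Rightarrow> bool" where
  "simple_graph V E \<longleftrightarrow>
     (\<forall>x y. E x y \<longrightarrow> x \<in> V \<and> y \<in> V) \<and>
     (\<forall>x y. E x y \<longleftrightarrow> E y x) \<and>
     (\<forall>x. \<not> E x x) \<and>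
     (\<forall>x\<in>V. finite {y. E x y}) \<and>
     graph_connected V E"

definition simple_tree :: "nat set \<Rightarrow> (nat \<Rightarrow> nat \<Rightarrow> bool) \<Rightarrow> bool" where
  "simple_tree V E \<longleftrightarrow> simple_graph V E \<and>
     (\<forall>x y. E x y \<longrightarrow> \<not> graph_connected V (\<lambda>a b. E a b \<and> {a, b} \<noteq> {x, y}))"

definition deg :: "(nat \<Rightarrow> nat \<Rightarrow> bool) \<Rightarrow> nat \<Rightarrow> real" where
  "deg E x = real (card {y. E x y})"

definition l2 :: "nat set \<Rightarrow> (nat \<Rightarrow> real) \<Rightarrow> bool" where
  "l2 V f \<longleftrightarrow> (\<forall>x. x \<notin> V \<longrightarrow> f x = 0) \<and> (\<lambda>x. (f x)\<^sup>2) summable_on V"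

definition l2_inner :: "nat set \<Rightarrow> (nat \<Rightarrow> real) \<Rightarrow> (nat \<Rightarrow> real) \<Rightarrow> real" where
  "l2_inner V f g = (\<Sum>\<^sub>\<infinity>x\<in>V. f x * g x)"

definition l2_norm :: "nat set \<Rightarrow> (nat \<Rightarrow> real) \<Rightarrow> real" where
  "l2_norm V f = sqrt (\<Sum>\<^sub>\<infinity>x\<in>V. (f x)\<^sup>2)"

definition fin_supp :: "nat set \<Rightarrow> (nat \<Rightarrow> real) \<Rightarrow> bool" where
  "fin_supp V f \<longleftrightarrow> finite {x. f x \<noteq> 0} \<and> {x. f x \<noteq> 0} \<subseteq> V"

definition energy :: "nat set \<Rightarrow> (nat \<Rightarrow> nat \<Rightarrow> bool) \<Rightarrow> (nat \<Rightarrow> real) \<Rightarrow> (nat \<Rightarrow> real) \<Rightarrow> real" where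
  "energy V E f g = (\<Sum>\<^sub>\<infinity>(x, y)\<in>V \<times> V. (if E x y then (f x - f y) * (g x - g y) / 2 else 0))"

text \<open>Domain of the closure of the form defined on finitely supported functions
  (= form domain of the Friedrichs extension = \<open>D(\<Delta>\<^sub>T\<^sup>1\<^sup>/\<^sup>2)\<close>).\<close>
definition form_dom :: "nat set \<Rightarrow> (nat \<Rightarrow> nat \<Rightarrow> bool) \<Rightarrow> (nat \<Rightarrow> real) set" where
  "form_dom V E = {f. l2 V f \<and>
     (\<exists>\<phi> :: nat \<Rightarrow> nat \<Rightarrow> real.
        (\<forall>n. fin_supp V (\<phi> n)) \<and>
        (\<lambda>n. l2_norm V (\<lambda>x. \<phi> n x - f x)) \<longlonglongrightarrow> 0 \<and>
        (\<forall>\<epsilon>>0. \<exists>N. \<forall>m\<ge>N. \<forall>n\<ge>N.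
            energy V E (\<lambda>x. \<phi> m x - \<phi> n x) (\<lambda>x. \<phi> m x - \<phi> n x) < \<epsilon>))}"

text \<open>Domain of the Friedrichs extension: the operator associated with the closed form.\<close>
definition friedrichs_dom :: "nat set \<Rightarrow> (nat \<Rightarrow> nat \<Rightarrow> bool) \<Rightarrow> (nat \<Rightarrow> real) set" where
  "friedrichs_dom V E = {f \<in> form_dom V E.
     \<exists>g. l2 V g \<and> (\<forall>\<psi>\<in>form_dom V E. energy V E f \<psi> = l2_inner V g \<psi>)}"

definition deg_dom :: "nat set \<Rightarrow> (nat \<Rightarrow> nat \<Rightarrow> bool) \<Rightarrow> (nat \<Rightarrow> real) set" where
  "deg_dom V E = {f. l2 V f \<and> l2 V (\<lambda>x. deg E x * f x)}"

definition sqrt_deg_dom :: "nat set \<Rightarrow> (nat \<Rightarrow> nat \<Rightarrow> bool) \<Rightarrow> (nat \<Rightarrow> real) set" where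
  "sqrt_deg_dom V E = {f. l2 V f \<and> l2 V (\<lambda>x. sqrt (deg E x) * f x)}"

end

theory Submission
  imports Defs "HOL-Library.Discrete_Functions"
begin

text \<open>
  On a tree given by a parent map, charging every edge to its child vertex \<open>x\<close> gives
  \<open>\<Sum> d \<phi>\<^sup>2 = \<Sum>\<^sub>x \<phi>(x)\<^sup>2 + \<phi>(parent x)\<^sup>2 \<le> 3 \<parallel>\<phi>\<parallel>\<^sup>2 + 2 Q(\<phi>)\<close>, while \<open>Q(\<phi>) \<le> 2 \<Sum> d \<phi>\<^sup>2\<close> holds on
  every graph. So on finitely supported functions the form norm is equivalent to the
  \<open>d\<^sup>1\<^sup>/\<^sup>2\<close>-weighted norm, and the closure of the form has domain \<open>\<D>(d\<^sup>1\<^sup>/\<^sup>2(Q))\<close>.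

  For the operator domains take the comb whose spine vertex \<open>2\<^sup>k\<close> carries \<open>2\<^sup>k - 1\<close> leaves.
  The function \<open>1/x\<close> on the leaves lies in \<open>\<D>(d(Q))\<close>, as \<open>d = 1\<close> there, but its Laplacian at
  \<open>2\<^sup>k\<close> is \<open>-\<Sum> 1/y\<close> over the leaves \<open>y\<close> of \<open>2\<^sup>k\<close>, which is at most \<open>-1/4\<close> for every \<open>k \<ge> 1\<close>;
  so it is not square summable and the function is not in \<open>\<D>(\<Delta>\<^sub>T)\<close>.
\<close>

section \<open>Square-summable functions and the form domain\<close>

lemma l2_UNIV_iff_summable: "l2 UNIV f \<longleftrightarrow> summable (\<lambda>x. (f x)\<^sup>2)"
  unfolding l2_def by (subst summable_on_UNIV_nonneg_real_iff) auto

lemma summable_on_finite_support: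
  assumes "finite {x. g x \<noteq> 0}"
  shows "g summable_on A"
proof -
  have "g summable_on (A \<inter> {x. g x \<noteq> 0})" using assms by simp
  moreover have "g summable_on (A \<inter> {x. g x \<noteq> 0}) \<longleftrightarrow> g summable_on A"
    by (rule summable_on_cong_neutral) auto
  ultimately show ?thesis by simp
qed

lemma fin_supp_in_form_dom:
  assumes "fin_supp V f"
  shows "f \<in> form_dom V E"
proof -
  have "l2 V f"
    using assms unfolding fin_supp_def l2_def by (auto intro: summable_on_finite_support)
  moreover have "energy V E (\<lambda>x. f x - f x) (\<lambda>x. f x - f x) = 0"
    unfolding energy_def by (rule infsum_0) auto
  ultimately show ?thesis
    using assms unfolding form_dom_def by (auto intro!: exI[of _ "\<lambda>_. f"] simp: l2_norm_def)
qed

lemma sum_le_infsum_nonneg: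
  fixes g :: "'a \<Rightarrow> real"
  assumes "g summable_on A" "\<And>x. x \<in> A \<Longrightarrow> 0 \<le> g x" "finite F" "F \<subseteq> A"
  shows "sum g F \<le> infsum g A"
  using infsum_mono_neutral[of g F g A] assms by auto

lemma abs_le_l2_norm:
  fixes g :: "nat \<Rightarrow> real"
  assumes "(\<lambda>x. (g x)\<^sup>2) summable_on V" "x \<in> V"
  shows "\<bar>g x\<bar> \<le> l2_norm V g"
proof -
  have "(g x)\<^sup>2 \<le> (\<Sum>\<^sub>\<infinity>y\<in>V. (g y)\<^sup>2)"
    using sum_le_infsum_nonneg[OF assms(1), of "{x}"] assms(2) by simp
  then show ?thesis
    unfolding l2_norm_def using real_sqrt_le_mono by fastforce
qed

lemma summable_on_square_diff:
  fixes f g :: "nat \<Rightarrow> real"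
  assumes "(\<lambda>x. (f x)\<^sup>2) summable_on A" "(\<lambda>x. (g x)\<^sup>2) summable_on A"
  shows "(\<lambda>x. (f x - g x)\<^sup>2) summable_on A"
proof (rule summable_on_comparison_test)
  show "(\<lambda>x. 2 * (f x)\<^sup>2 + 2 * (g x)\<^sup>2) summable_on A"
    by (intro summable_on_add summable_on_cmult_right assms)
  fix x
  have "0 \<le> (f x + g x)\<^sup>2" by simp
  then show "(f x - g x)\<^sup>2 \<le> 2 * (f x)\<^sup>2 + 2 * (g x)\<^sup>2"
    by (simp add: power2_eq_square algebra_simps)
qed simp

lemma l2_norm_convergence_imp_pointwise:
  assumes "l2 V f" "\<And>n. fin_supp V (\<phi> n)"
    and "(\<lambda>n. l2_norm V (\<lambda>x. \<phi> n x - f x)) \<longlonglongrightarrow> 0"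
  shows "(\<lambda>n. \<phi> n x) \<longlonglongrightarrow> f x"
proof (cases "x \<in> V")
  case True
  have "(\<lambda>x. (\<phi> n x)\<^sup>2) summable_on V" for n
    using assms(2)[of n] unfolding fin_supp_def
    by (intro summable_on_finite_support) (auto elim: finite_subset[rotated])
  moreover have "(\<lambda>x. (f x)\<^sup>2) summable_on V" using assms(1) unfolding l2_def by simp
  ultimately have "\<bar>\<phi> n x - f x\<bar> \<le> l2_norm V (\<lambda>x. \<phi> n x - f x)" for n
    using abs_le_l2_norm[OF summable_on_square_diff True] by blast
  then have "(\<lambda>n. \<phi> n x - f x) \<longlonglongrightarrow> 0"
    by (intro Lim_null_comparison[OF _ assms(3)]) simp
  then show ?thesis by (simp add: LIM_zero_iff)
next
  case False
  then have "\<phi> n x = 0" for n using assms(2)[of n] unfolding fin_supp_def by blast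
  moreover have "f x = 0" using False assms(1) unfolding l2_def by blast
  ultimately show ?thesis by simp
qed

lemma l2_norm_truncation_tendsto:
  assumes "l2 UNIV f"
  shows "(\<lambda>n. l2_norm UNIV (\<lambda>x. (if x < n then f x else 0) - f x)) \<longlonglongrightarrow> 0"
proof -
  let ?b = "\<lambda>x. (f x)\<^sup>2"
  have "?b sums suminf ?b" using assms by (simp add: l2_UNIV_iff_summable summable_sums)
  then have "(\<lambda>x. if x \<in> {..<n} then 0 else ?b x) sums (suminf ?b - (\<Sum>x<n. ?b x))" for n
    by (rule sums_If_finite_set') (auto simp: sum_negf)
  moreover have "((if x < n then f x else 0) - f x)\<^sup>2 = (if x \<in> {..<n} then 0 else ?b x)" for n x
    by simp
  ultimately have "((\<lambda>x. ((if x < n then f x else 0) - f x)\<^sup>2) has_sum (suminf ?b - (\<Sum>x<n. ?b x))) UNIV"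
    for n by (intro sums_nonneg_imp_has_sum) auto
  then have "l2_norm UNIV (\<lambda>x. (if x < n then f x else 0) - f x) = sqrt (suminf ?b - (\<Sum>x<n. ?b x))"
    for n unfolding l2_norm_def by (simp add: infsumI)
  moreover have "(\<lambda>n. sqrt (suminf ?b - (\<Sum>x<n. ?b x))) \<longlonglongrightarrow> sqrt (suminf ?b - suminf ?b)"
    using assms by (intro tendsto_real_sqrt tendsto_diff tendsto_const summable_LIMSEQ)
      (simp add: l2_UNIV_iff_summable)
  ultimately show ?thesis by simp
qed

lemma sqrt_deg_dom_UNIV:
  "sqrt_deg_dom UNIV E = {f. l2 UNIV f \<and> summable (\<lambda>x. deg E x * (f x)\<^sup>2)}"
  unfolding sqrt_deg_dom_def l2_UNIV_iff_summable by (simp add: power_mult_distrib deg_def)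

section \<open>Trees given by a parent map\<close>

locale nat_rooted_tree =
  fixes parent :: "nat \<Rightarrow> nat"
  assumes parent_root: "parent 0 = 0"
    and parent_less: "x \<noteq> 0 \<Longrightarrow> parent x < x"
    and finite_children: "finite {y. parent y = x}"
begin

definition tree_edge :: "nat \<Rightarrow> nat \<Rightarrow> bool" where
  "tree_edge x y \<longleftrightarrow> (x \<noteq> 0 \<and> parent x = y) \<or> (y \<noteq> 0 \<and> parent y = x)"

lemma parent_le: "parent x \<le> x"
  using parent_less[of x] parent_root by (cases "x = 0") auto

lemma tree_edge_sym: "tree_edge x y \<longleftrightarrow> tree_edge y x"
  unfolding tree_edge_def by auto

lemma tree_edge_irrefl: "\<not> tree_edge x x"
  unfolding tree_edge_def using parent_less[of x] by auto

lemma finite_neighbours: "finite {y. tree_edge x y}"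
  by (rule finite_subset[of _ "insert (parent x) {y. parent y = x}"])
    (auto simp: tree_edge_def finite_children)

lemma rtranclp_tree_edge_root: "tree_edge\<^sup>*\<^sup>* x 0"
proof (induction x rule: less_induct)
  case (less x)
  show ?case
  proof (cases "x = 0")
    case False
    then have "tree_edge x (parent x)" by (simp add: tree_edge_def)
    with less parent_less[OF False] show ?thesis by (blast intro: converse_rtranclp_into_rtranclp)
  qed simp
qed

lemma graph_connected_tree_edge: "graph_connected UNIV tree_edge"
proof -
  have "symp tree_edge" by (simp add: symp_def tree_edge_sym)
  then have "tree_edge\<^sup>*\<^sup>* 0 y" for y
    using rtranclp_tree_edge_root[of y] by (simp add: symp_rtranclp[THEN sympD])
  then show ?thesis
    unfolding graph_connected_def using rtranclp_tree_edge_root by (blast intro: rtranclp_trans)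
qed

lemma parent_edge_disconnects:
  assumes "x \<noteq> 0"
  shows "\<not> graph_connected UNIV (\<lambda>a b. tree_edge a b \<and> {a, b} \<noteq> {x, parent x})"
proof
  let ?E = "\<lambda>a b. tree_edge a b \<and> {a, b} \<noteq> {x, parent x}"
  define descendants where "descendants = {z. \<exists>k. (parent ^^ k) z = x}"
  assume "graph_connected UNIV ?E"
  then have "?E\<^sup>*\<^sup>* x 0" unfolding graph_connected_def by blast
  moreover have "w \<in> descendants" if "?E\<^sup>*\<^sup>* x w" for w
    using that
  proof (induction rule: rtranclp_induct)
    case base
    show ?case unfolding descendants_def by (auto intro: exI[of _ 0])
  next
    case (step z w)
    then obtain k where k: "(parent ^^ k) z = x" unfolding descendants_def by blast
    show ?case
    proof (cases "z \<noteq> 0 \<and> parent z = w")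
      case True
      with k step(2) obtain j where "k = Suc j" by (cases k) auto
      with k True have "(parent ^^ j) w = x" by (simp add: funpow_Suc_right del: funpow.simps)
      then show ?thesis unfolding descendants_def by blast
    next
      case False
      with step(2) have "parent w = z" by (auto simp: tree_edge_def)
      with k have "(parent ^^ Suc k) w = x" by (simp add: funpow_Suc_right del: funpow.simps)
      then show ?thesis unfolding descendants_def by blast
    qed
  qed
  ultimately obtain k where "(parent ^^ k) 0 = x" unfolding descendants_def by blast
  moreover have "(parent ^^ k) 0 = 0" by (induction k) (auto simp: parent_root)
  ultimately show False using assms by simp
qed

lemma simple_tree_tree_edge: "simple_tree UNIV tree_edge"
  unfolding simple_tree_def simple_graph_def
proof (intro conjI allI impI ballI)
  fix x y
  assume "tree_edge x y"
  then consider "x \<noteq> 0" "y = parent x" | "y \<noteq> 0" "x = parent y"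
    unfolding tree_edge_def by auto
  then show "\<not> graph_connected UNIV (\<lambda>a b. tree_edge a b \<and> {a, b} \<noteq> {x, y})"
    by cases (use parent_edge_disconnects in \<open>auto simp: insert_commute\<close>)
qed (use graph_connected_tree_edge tree_edge_sym tree_edge_irrefl finite_neighbours in auto)


lemma sum_tree_edges_atMost:
  "(\<Sum>(x, y)\<in>{..m} \<times> {..m}. if tree_edge x y then w x y else 0)
     = (\<Sum>x\<in>{1..m}. w x (parent x) + w (parent x) x)"
proof -
  let ?up = "(\<lambda>x. (x, parent x)) ` {1..m}" and ?down = "(\<lambda>x. (parent x, x)) ` {1..m}"
  have edges: "{p \<in> {..m} \<times> {..m}. case_prod tree_edge p} = ?up \<union> ?down"
  proof (intro equalityI subsetI)
    fix p
    assume "p \<in> {p \<in> {..m} \<times> {..m}. case_prod tree_edge p}"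
    then obtain x y where "p = (x, y)" "x \<le> m" "y \<le> m" "tree_edge x y" by auto
    then show "p \<in> ?up \<union> ?down" unfolding tree_edge_def by auto
  next
    fix p
    assume "p \<in> ?up \<union> ?down"
    then obtain x where "x \<in> {1..m}" "p = (x, parent x) \<or> p = (parent x, x)" by blast
    with parent_le[of x] show "p \<in> {p \<in> {..m} \<times> {..m}. case_prod tree_edge p}"
      by (auto simp: tree_edge_def)
  qed
  have "(x, parent x) \<noteq> (parent y, y)" if "x \<in> {1..m}" "y \<in> {1..m}" for x y
    using parent_less[of x] parent_less[of y] that by auto
  then have disjoint: "?up \<inter> ?down = {}" by blast
  have "(\<Sum>(x, y)\<in>{..m} \<times> {..m}. if tree_edge x y then w x y else 0)
      = (\<Sum>(x, y)\<in>?up \<union> ?down. w x y)"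
    unfolding edges[symmetric] by (simp add: sum.inter_filter case_prod_unfold)
  also have "\<dots> = (\<Sum>(x, y)\<in>?up. w x y) + (\<Sum>(x, y)\<in>?down. w x y)"
    by (rule sum.union_disjoint) (use disjoint in auto)
  also have "\<dots> = (\<Sum>x\<in>{1..m}. w x (parent x) + w (parent x) x)"
    by (simp add: sum.reindex inj_on_def sum.distrib)
  finally show ?thesis .
qed

definition truncated_energy :: "nat \<Rightarrow> (nat \<Rightarrow> real) \<Rightarrow> real" where
  "truncated_energy m \<phi> = (\<Sum>x\<in>{1..m}. (\<phi> x - \<phi> (parent x))\<^sup>2)"

definition truncated_degree_mass :: "nat \<Rightarrow> (nat \<Rightarrow> real) \<Rightarrow> real" where
  "truncated_degree_mass m \<phi> = (\<Sum>x\<in>{1..m}. (\<phi> x)\<^sup>2 + (\<phi> (parent x))\<^sup>2)"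

lemma truncated_degree_mass_eq:
  "truncated_degree_mass m \<phi> = (\<Sum>x\<le>m. real (card {y. y \<le> m \<and> tree_edge x y}) * (\<phi> x)\<^sup>2)"
proof -
  have "truncated_degree_mass m \<phi> = (\<Sum>x\<le>m. \<Sum>y\<le>m. if tree_edge x y then (\<phi> x)\<^sup>2 else 0)"
    unfolding truncated_degree_mass_def
    using sum_tree_edges_atMost[where m = m and w = "\<lambda>x y. (\<phi> x)\<^sup>2"] by (simp add: sum.cartesian_product)
  also have "\<dots> = (\<Sum>x\<le>m. real (card {y. y \<le> m \<and> tree_edge x y}) * (\<phi> x)\<^sup>2)"
    by (simp add: sum.If_cases Int_def conj_commute)
  finally show ?thesis .
qed

lemma truncated_energy_le_degree_mass: "truncated_energy m \<phi> \<le> 2 * truncated_degree_mass m \<phi>"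
proof -
  have "(a - b)\<^sup>2 \<le> 2 * (a\<^sup>2 + b\<^sup>2)" for a b :: real
    using sum_squares_ge_zero[of "a + b" 0] by (simp add: power2_eq_square algebra_simps)
  then show ?thesis
    unfolding truncated_energy_def truncated_degree_mass_def sum_distrib_left by (rule sum_mono)
qed

lemma truncated_degree_mass_le:
  "truncated_degree_mass m \<phi> \<le> 3 * (\<Sum>x\<le>m. (\<phi> x)\<^sup>2) + 2 * truncated_energy m \<phi>"
proof -
  have "a\<^sup>2 + b\<^sup>2 \<le> 3 * a\<^sup>2 + 2 * (a - b)\<^sup>2" for a b :: real
    using zero_le_power2[of "2 * a - b"] by (simp add: power2_eq_square algebra_simps)
  then have "truncated_degree_mass m \<phi> \<le> 3 * (\<Sum>x\<in>{1..m}. (\<phi> x)\<^sup>2) + 2 * truncated_energy m \<phi>"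
    unfolding truncated_energy_def truncated_degree_mass_def sum_distrib_left sum.distrib[symmetric]
    by (rule sum_mono)
  also have "(\<Sum>x\<in>{1..m}. (\<phi> x)\<^sup>2) \<le> (\<Sum>x\<le>m. (\<phi> x)\<^sup>2)"
    by (rule sum_mono2) auto
  finally show ?thesis by simp
qed

lemma truncated_energy_mono: "m \<le> m' \<Longrightarrow> truncated_energy m \<phi> \<le> truncated_energy m' \<phi>"
  unfolding truncated_energy_def by (rule sum_mono2) auto

lemma truncated_energy_triangle:
  "truncated_energy m u \<le> 2 * truncated_energy m (\<lambda>x. u x - v x) + 2 * truncated_energy m v"
proof -
  have "(a - b)\<^sup>2 \<le> 2 * ((a - c) - (b - d))\<^sup>2 + 2 * (c - d)\<^sup>2" for a b c d :: real
    using zero_le_power2[of "(a - b) - 2 * (c - d)"] by (simp add: power2_eq_square algebra_simps)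
  then show ?thesis
    unfolding truncated_energy_def sum_distrib_left sum.distrib[symmetric] by (rule sum_mono)
qed

lemma neighbourhood_bounded:
  assumes "finite F"
  obtains m where "\<And>x y. x \<in> F \<Longrightarrow> x \<le> m \<and> (tree_edge x y \<longrightarrow> y \<le> m)"
proof -
  have "finite (F \<union> (\<Union>x\<in>F. {y. tree_edge x y}))"
    using assms finite_neighbours by blast
  then obtain m where "\<And>z. z \<in> F \<union> (\<Union>x\<in>F. {y. tree_edge x y}) \<Longrightarrow> z \<le> m"
    by (meson finite_nat_set_iff_bounded_le)
  then show ?thesis using that by blast
qed

lemma energy_eq_truncated_energy:
  assumes "\<And>x y. \<psi> x \<noteq> 0 \<Longrightarrow> x \<le> m \<and> (tree_edge x y \<longrightarrow> y \<le> m)"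
  shows "energy UNIV tree_edge \<psi> \<psi> = truncated_energy m \<psi>"
proof -
  let ?e = "\<lambda>x y. if tree_edge x y then (\<psi> x - \<psi> y) * (\<psi> x - \<psi> y) / 2 else 0"
  have outside: "?e x y = 0" if "\<not> (x \<le> m \<and> y \<le> m)" for x y
    using that assms[of x y] assms[of y x] tree_edge_sym[of x y] by fastforce
  have "energy UNIV tree_edge \<psi> \<psi> = (\<Sum>(x, y)\<in>{..m} \<times> {..m}. ?e x y)"
    unfolding energy_def
    by (subst infsum_cong_neutral[where T = "{..m} \<times> {..m}"]) (use outside in auto)
  also have "\<dots> = truncated_energy m \<psi>"
    unfolding sum_tree_edges_atMost truncated_energy_def
    by (simp add: power2_eq_square algebra_simps)
  finally show ?thesis .
qed

lemma truncated_energy_le_energy: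
  assumes "finite {x. \<psi> x \<noteq> 0}"
  shows "truncated_energy m \<psi> \<le> energy UNIV tree_edge \<psi> \<psi>"
proof -
  obtain M where M: "\<And>x y. x \<in> insert m {x. \<psi> x \<noteq> 0} \<Longrightarrow> x \<le> M \<and> (tree_edge x y \<longrightarrow> y \<le> M)"
    using neighbourhood_bounded[of "insert m {x. \<psi> x \<noteq> 0}"] assms by blast
  then have "truncated_energy m \<psi> \<le> truncated_energy M \<psi>"
    by (intro truncated_energy_mono) blast
  also have "\<dots> = energy UNIV tree_edge \<psi> \<psi>"
    by (rule energy_eq_truncated_energy[symmetric]) (use M in blast)
  finally show ?thesis .
qed


lemma degree_sum_le_truncated:
  assumes "\<And>x y. x < K \<Longrightarrow> x \<le> M \<and> (tree_edge x y \<longrightarrow> y \<le> M)"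
  shows "(\<Sum>x<K. deg tree_edge x * (\<psi> x)\<^sup>2) \<le> 3 * (\<Sum>x\<le>M. (\<psi> x)\<^sup>2) + 2 * truncated_energy M \<psi>"
proof -
  have "card {y. y \<le> M \<and> tree_edge x y} = card {y. tree_edge x y}" if "x < K" for x
    using assms[OF that] by (intro arg_cong[where f = card]) blast
  then have "(\<Sum>x<K. deg tree_edge x * (\<psi> x)\<^sup>2)
      = (\<Sum>x<K. real (card {y. y \<le> M \<and> tree_edge x y}) * (\<psi> x)\<^sup>2)"
    by (simp add: deg_def)
  also have "\<dots> \<le> (\<Sum>x\<le>M. real (card {y. y \<le> M \<and> tree_edge x y}) * (\<psi> x)\<^sup>2)"
    by (rule sum_mono2) (use assms in auto)
  also have "\<dots> = truncated_degree_mass M \<psi>"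
    by (simp add: truncated_degree_mass_eq)
  also have "\<dots> \<le> 3 * (\<Sum>x\<le>M. (\<psi> x)\<^sup>2) + 2 * truncated_energy M \<psi>"
    by (rule truncated_degree_mass_le)
  finally show ?thesis .
qed

lemma degree_sum_le_energy:
  assumes "finite {x. u x \<noteq> 0}" "finite {x. v x \<noteq> 0}"
    and "\<And>x y. x < K \<Longrightarrow> x \<le> M \<and> (tree_edge x y \<longrightarrow> y \<le> M)"
  shows "(\<Sum>x<K. deg tree_edge x * (u x)\<^sup>2) \<le> 3 * (\<Sum>x\<le>M. (u x)\<^sup>2)
    + 4 * energy UNIV tree_edge (\<lambda>x. u x - v x) (\<lambda>x. u x - v x) + 4 * energy UNIV tree_edge v v"
proof -
  have "finite {x. u x - v x \<noteq> 0}"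
    by (rule finite_subset[OF _ finite_UnI[OF assms(1,2)]]) auto
  then have "truncated_energy M (\<lambda>x. u x - v x)
      \<le> energy UNIV tree_edge (\<lambda>x. u x - v x) (\<lambda>x. u x - v x)"
    by (rule truncated_energy_le_energy)
  moreover have "truncated_energy M v \<le> energy UNIV tree_edge v v"
    by (rule truncated_energy_le_energy[OF assms(2)])
  ultimately show ?thesis
    using truncated_energy_triangle[where m = M and u = u and v = v]
      degree_sum_le_truncated[where K = K and M = M and \<psi> = u, OF assms(3)] by linarith
qed

lemma energy_le_degree_sum:
  assumes "finite A" "{x. \<psi> x \<noteq> 0} \<subseteq> A"
  shows "energy UNIV tree_edge \<psi> \<psi> \<le> 2 * (\<Sum>x\<in>A. deg tree_edge x * (\<psi> x)\<^sup>2)"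
proof -
  obtain m where m: "\<And>x y. x \<in> A \<Longrightarrow> x \<le> m \<and> (tree_edge x y \<longrightarrow> y \<le> m)"
    using neighbourhood_bounded[OF assms(1)] by blast
  have "energy UNIV tree_edge \<psi> \<psi> = truncated_energy m \<psi>"
    by (rule energy_eq_truncated_energy) (use m assms(2) in blast)
  also have "\<dots> \<le> 2 * truncated_degree_mass m \<psi>"
    by (rule truncated_energy_le_degree_mass)
  also have "truncated_degree_mass m \<psi> \<le> (\<Sum>x\<le>m. deg tree_edge x * (\<psi> x)\<^sup>2)"
    unfolding truncated_degree_mass_eq deg_def
    by (intro sum_mono mult_right_mono) (auto intro!: card_mono finite_neighbours)
  also have "\<dots> = (\<Sum>x\<in>A. deg tree_edge x * (\<psi> x)\<^sup>2)"
    by (rule sum.mono_neutral_right) (use m assms(2) in auto)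
  finally show ?thesis by simp
qed

lemma sqrt_deg_dom_subset_form_dom: "sqrt_deg_dom UNIV tree_edge \<subseteq> form_dom UNIV tree_edge"
proof
  fix f
  assume "f \<in> sqrt_deg_dom UNIV tree_edge"
  then have f: "l2 UNIV f" and summable: "summable (\<lambda>x. deg tree_edge x * (f x)\<^sup>2)"
    by (auto simp: sqrt_deg_dom_UNIV)
  define \<phi> where "\<phi> n x = (if x < n then f x else 0)" for n x
  have "fin_supp UNIV (\<phi> n)" for n
    unfolding fin_supp_def \<phi>_def by (auto intro: finite_subset[of _ "{..<n}"])
  moreover have "(\<lambda>n. l2_norm UNIV (\<lambda>x. \<phi> n x - f x)) \<longlonglongrightarrow> 0"
    unfolding \<phi>_def by (rule l2_norm_truncation_tendsto[OF f])
  moreover have "\<exists>N. \<forall>m\<ge>N. \<forall>n\<ge>N.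
      energy UNIV tree_edge (\<lambda>x. \<phi> m x - \<phi> n x) (\<lambda>x. \<phi> m x - \<phi> n x) < \<epsilon>" if "\<epsilon> > 0" for \<epsilon>
  proof -
    obtain N where N: "\<And>k l. k \<ge> N \<Longrightarrow> norm (\<Sum>x\<in>{k..<l}. deg tree_edge x * (f x)\<^sup>2) < \<epsilon> / 2"
      using summable \<open>\<epsilon> > 0\<close> unfolding summable_Cauchy by (meson half_gt_zero)
    have "energy UNIV tree_edge (\<lambda>x. \<phi> m x - \<phi> n x) (\<lambda>x. \<phi> m x - \<phi> n x) < \<epsilon>"
      if "m \<ge> N" "n \<ge> N" for m n
    proof -
      let ?I = "{min m n..<max m n}"
      have "{x. \<phi> m x - \<phi> n x \<noteq> 0} \<subseteq> ?I"
        by (auto simp: \<phi>_def split: if_splits)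
      then have "energy UNIV tree_edge (\<lambda>x. \<phi> m x - \<phi> n x) (\<lambda>x. \<phi> m x - \<phi> n x)
          \<le> 2 * (\<Sum>x\<in>?I. deg tree_edge x * (\<phi> m x - \<phi> n x)\<^sup>2)"
        by (intro energy_le_degree_sum) simp_all
      also have "(\<Sum>x\<in>?I. deg tree_edge x * (\<phi> m x - \<phi> n x)\<^sup>2) = (\<Sum>x\<in>?I. deg tree_edge x * (f x)\<^sup>2)"
        by (rule sum.cong) (auto simp: \<phi>_def)
      also have "\<dots> < \<epsilon> / 2"
        using N[of "min m n" "max m n"] that by (simp add: abs_less_iff)
      finally show ?thesis by simp
    qed
    then show ?thesis by blast
  qed
  ultimately show "f \<in> form_dom UNIV tree_edge"
    unfolding form_dom_def using f by blast
qed

lemma form_dom_subset_sqrt_deg_dom: "form_dom UNIV tree_edge \<subseteq> sqrt_deg_dom UNIV tree_edge"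
proof
  fix f
  assume "f \<in> form_dom UNIV tree_edge"
  then obtain \<phi> :: "nat \<Rightarrow> nat \<Rightarrow> real" where f: "l2 UNIV f"
    and fs: "\<And>n. fin_supp UNIV (\<phi> n)"
    and conv: "(\<lambda>n. l2_norm UNIV (\<lambda>x. \<phi> n x - f x)) \<longlonglongrightarrow> 0"
    and cauchy: "\<And>\<epsilon>. \<epsilon> > 0 \<Longrightarrow> \<exists>N. \<forall>m\<ge>N. \<forall>n\<ge>N.
        energy UNIV tree_edge (\<lambda>x. \<phi> m x - \<phi> n x) (\<lambda>x. \<phi> m x - \<phi> n x) < \<epsilon>"
    unfolding form_dom_def by blast
  have pointwise: "(\<lambda>n. \<phi> n x) \<longlonglongrightarrow> f x" for x
    by (rule l2_norm_convergence_imp_pointwise[OF f fs conv])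
  have fin: "finite {x. \<phi> n x \<noteq> 0}" for n
    using fs[of n] by (simp add: fin_supp_def)
  obtain N where N: "\<And>n. n \<ge> N \<Longrightarrow>
      energy UNIV tree_edge (\<lambda>x. \<phi> n x - \<phi> N x) (\<lambda>x. \<phi> n x - \<phi> N x) < 1"
    using cauchy[of 1] by (meson order_refl zero_less_one)
  define C where "C = 4 + 4 * energy UNIV tree_edge (\<phi> N) (\<phi> N)"
  have bounded: "(\<Sum>x<K. deg tree_edge x * (f x)\<^sup>2) \<le> 3 * (\<Sum>\<^sub>\<infinity>x. (f x)\<^sup>2) + C" for K
  proof -
    obtain M where "\<And>x y. x \<in> {..<K} \<Longrightarrow> x \<le> M \<and> (tree_edge x y \<longrightarrow> y \<le> M)"
      using neighbourhood_bounded[OF finite_lessThan[of K]] by blast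
    then have M: "\<And>x y. x < K \<Longrightarrow> x \<le> M \<and> (tree_edge x y \<longrightarrow> y \<le> M)"
      by simp
    have "(\<Sum>x<K. deg tree_edge x * (\<phi> n x)\<^sup>2) \<le> 3 * (\<Sum>x\<le>M. (\<phi> n x)\<^sup>2) + C" if "n \<ge> N" for n
      using degree_sum_le_energy[where K = K and M = M, OF fin[of n] fin[of N] M] N[OF that] unfolding C_def by linarith
    moreover have "(\<lambda>n. \<Sum>x<K. deg tree_edge x * (\<phi> n x)\<^sup>2) \<longlonglongrightarrow> (\<Sum>x<K. deg tree_edge x * (f x)\<^sup>2)"
      by (intro tendsto_intros pointwise)
    moreover have "(\<lambda>n. 3 * (\<Sum>x\<le>M. (\<phi> n x)\<^sup>2) + C) \<longlonglongrightarrow> 3 * (\<Sum>x\<le>M. (f x)\<^sup>2) + C"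
      by (intro tendsto_intros pointwise)
    ultimately have "(\<Sum>x<K. deg tree_edge x * (f x)\<^sup>2) \<le> 3 * (\<Sum>x\<le>M. (f x)\<^sup>2) + C"
      by (blast intro: LIMSEQ_le)
    also have "(\<Sum>x\<le>M. (f x)\<^sup>2) \<le> (\<Sum>\<^sub>\<infinity>x. (f x)\<^sup>2)"
      by (rule sum_le_infsum_nonneg) (use f in \<open>auto simp: l2_def\<close>)
    finally show ?thesis by simp
  qed
  have "summable (\<lambda>x. deg tree_edge x * (f x)\<^sup>2)"
    by (rule summableI_nonneg_bounded[OF _ bounded]) (simp add: deg_def)
  with f show "f \<in> sqrt_deg_dom UNIV tree_edge"
    by (simp add: sqrt_deg_dom_UNIV)
qed

lemma form_dom_eq_sqrt_deg_dom: "form_dom UNIV tree_edge = sqrt_deg_dom UNIV tree_edge"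
  using form_dom_subset_sqrt_deg_dom sqrt_deg_dom_subset_form_dom by blast


lemma energy_indicator:
  "energy UNIV tree_edge f (\<lambda>x. if x = h then 1 else 0) = (\<Sum>y | tree_edge h y. f h - f y)"
proof -
  let ?N = "{y. tree_edge h y}"
  let ?u = "\<lambda>(x, y). if tree_edge x y
      then (f x - f y) * ((if x = h then 1 else 0) - (if y = h then 1 else 0)) / 2 else (0::real)"
  have outside: "?u (x, y) = 0" if "(x, y) \<notin> {h} \<times> ?N \<union> ?N \<times> {h}" for x y
    using that tree_edge_sym[of x y] by auto
  have disjoint: "({h} \<times> ?N) \<inter> (?N \<times> {h}) = {}"
    using tree_edge_irrefl by auto
  have "energy UNIV tree_edge f (\<lambda>x. if x = h then 1 else 0) = infsum ?u ({h} \<times> ?N \<union> ?N \<times> {h})"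
    unfolding energy_def by (rule infsum_cong_neutral) (use outside in auto)
  also have "\<dots> = sum ?u ({h} \<times> ?N) + sum ?u (?N \<times> {h})"
    using finite_neighbours disjoint by (simp add: sum.union_disjoint)
  also have "sum ?u ({h} \<times> ?N) = (\<Sum>y\<in>?N. (f h - f y) / 2)"
    by (rule sum.reindex_cong[where l = "Pair h"])
      (use tree_edge_irrefl[of h] in \<open>auto simp: inj_on_def\<close>)
  also have "sum ?u (?N \<times> {h}) = (\<Sum>x\<in>?N. (f h - f x) / 2)"
  proof (rule sum.reindex_cong[where l = "\<lambda>x. (x, h)"])
    fix x
    assume "x \<in> ?N"
    then have "tree_edge x h" "x \<noteq> h"
      using tree_edge_sym[of h x] tree_edge_irrefl[of h] by auto
    then show "?u (x, h) = (f h - f x) / 2" by simp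
  qed (auto simp: inj_on_def)
  finally show ?thesis by (simp only: sum.distrib[symmetric] field_sum_of_halves)
qed

end

section \<open>The comb\<close>

text \<open>The vertex \<open>2\<^sup>k\<close> has the children \<open>2\<^sup>k + 1, \<dots>, 2\<^sup>k\<^sup>+\<^sup>1\<close>: the last one continues the spine
  \<open>0 - 1 - 2 - 4 - 8 - \<dots>\<close>, the other \<open>2\<^sup>k - 1\<close> are leaves.\<close>

definition comb_parent :: "nat \<Rightarrow> nat" where
  "comb_parent x = (if x \<le> 1 then 0 else 2 ^ floor_log (x - 1))"

lemma comb_parent_less: "x \<noteq> 0 \<Longrightarrow> comb_parent x < x"
  using floor_log_exp2_le[of "x - 1"] by (cases "x \<le> 1") (auto simp: comb_parent_def)

lemma le_double_comb_parent: "x \<le> 2 * comb_parent x + 1"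
  using floor_log_exp2_gt[of "x - 1"] by (auto simp: comb_parent_def)

lemma comb_parent_eq:
  assumes "2 ^ k < x" "x \<le> 2 ^ Suc k"
  shows "comb_parent x = 2 ^ k"
proof -
  have "\<not> x \<le> 1" using assms(1) one_le_power[of "2::nat" k] by linarith
  moreover have "floor_log (x - 1) = k"
    by (rule floor_log_eqI) (use assms calculation in auto)
  ultimately show ?thesis by (simp add: comb_parent_def)
qed

interpretation comb: nat_rooted_tree comb_parent
proof
  show "comb_parent 0 = 0" by (simp add: comb_parent_def)
  show "comb_parent x < x" if "x \<noteq> 0" for x using that by (rule comb_parent_less)
  have "{y. comb_parent y = x} \<subseteq> {..2 * x + 1}" for x
    using le_double_comb_parent by auto
  then show "finite {y. comb_parent y = x}" for x
    using finite_subset by blast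
qed

definition comb_leaf :: "nat \<Rightarrow> bool" where
  "comb_leaf x \<longleftrightarrow> x \<noteq> 0 \<and> (\<forall>j. x \<noteq> 2 ^ j)"

definition leaf_reciprocal :: "nat \<Rightarrow> real" where
  "leaf_reciprocal x = (if comb_leaf x then 1 / real x else 0)"

lemma comb_leaf_between:
  assumes "2 ^ k < x" "x < 2 ^ Suc k"
  shows "comb_leaf x"
proof -
  have "x \<noteq> 2 ^ j" for j
  proof
    assume "x = 2 ^ j"
    with assms power_strict_increasing_iff[of "2::nat" k j] power_strict_increasing_iff[of "2::nat" j "Suc k"]
    have "k < j" "j < Suc k" by auto
    then show False by simp
  qed
  with assms show ?thesis unfolding comb_leaf_def by auto
qed

lemma deg_comb_leaf:
  assumes "comb_leaf x"
  shows "deg comb.tree_edge x = 1"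
proof -
  have "comb_parent y \<noteq> x" for y
    using assms unfolding comb_parent_def comb_leaf_def by auto
  with assms have "{y. comb.tree_edge x y} = {comb_parent x}"
    unfolding comb.tree_edge_def comb_leaf_def by auto
  then show ?thesis by (simp add: deg_def)
qed

lemma leaf_reciprocal_in_deg_dom: "leaf_reciprocal \<in> deg_dom UNIV comb.tree_edge"
proof -
  have "l2 UNIV leaf_reciprocal"
    unfolding l2_UNIV_iff_summable
    by (rule summable_comparison_test'[OF inverse_power_summable[of 2]])
      (simp_all add: leaf_reciprocal_def power_inverse divide_inverse)
  moreover have "(\<lambda>x. deg comb.tree_edge x * leaf_reciprocal x) = leaf_reciprocal"
    by (simp add: fun_eq_iff leaf_reciprocal_def deg_comb_leaf)
  ultimately show ?thesis unfolding deg_dom_def by simp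
qed

lemma energy_leaf_reciprocal_indicator:
  assumes "k \<ge> 1"
  shows "energy UNIV comb.tree_edge leaf_reciprocal (\<lambda>x. if x = 2 ^ k then 1 else 0) \<le> - 1 / 4"
proof -
  let ?leaves = "{2 ^ k<..<2 ^ Suc k :: nat}"
  have leaves: "?leaves \<subseteq> {y. comb.tree_edge (2 ^ k) y}"
    by (auto simp: comb.tree_edge_def comb_parent_eq)
  have "energy UNIV comb.tree_edge leaf_reciprocal (\<lambda>x. if x = 2 ^ k then 1 else 0)
      = - (\<Sum>y | comb.tree_edge (2 ^ k) y. leaf_reciprocal y)"
    by (simp add: comb.energy_indicator leaf_reciprocal_def comb_leaf_def sum_negf)
  also have "\<dots> \<le> - (\<Sum>y\<in>?leaves. leaf_reciprocal y)"
    using leaves comb.finite_neighbours by (simp add: sum_mono2 leaf_reciprocal_def)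
  also have "\<dots> \<le> - (\<Sum>y\<in>?leaves. 1 / 2 ^ Suc k)"
    by (intro le_imp_neg_le sum_mono)
      (auto simp: leaf_reciprocal_def comb_leaf_between frac_le simp del: power_Suc)
  also have "\<dots> = - ((2 ^ k - 1) / 2 ^ Suc k)"
    using one_le_power[of "2::nat" k] by (simp add: of_nat_diff)
  also have "\<dots> \<le> - 1 / 4"
    using power_increasing[OF assms, of "2::real"] by (simp add: field_simps)
  finally show ?thesis .
qed

lemma leaf_reciprocal_not_in_friedrichs_dom: "leaf_reciprocal \<notin> friedrichs_dom UNIV comb.tree_edge"
proof
  assume "leaf_reciprocal \<in> friedrichs_dom UNIV comb.tree_edge"
  then obtain g where g: "l2 UNIV g"
    and weak: "\<And>\<psi>. \<psi> \<in> form_dom UNIV comb.tree_edge \<Longrightarrow>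
      energy UNIV comb.tree_edge leaf_reciprocal \<psi> = l2_inner UNIV g \<psi>"
    unfolding friedrichs_dom_def by blast
  have g_spine: "g (2 ^ k) \<le> - 1 / 4" if "k \<ge> 1" for k
  proof -
    let ?\<delta> = "\<lambda>x. if x = 2 ^ k then 1 else (0::real)"
    have "?\<delta> \<in> form_dom UNIV comb.tree_edge"
      by (rule fin_supp_in_form_dom) (simp add: fin_supp_def)
    moreover have "l2_inner UNIV g ?\<delta> = g (2 ^ k)"
      unfolding l2_inner_def by (subst infsum_cong_neutral[where T = "{2 ^ k}"]) auto
    ultimately show ?thesis
      using weak energy_leaf_reciprocal_indicator[OF that] by simp
  qed
  have "(\<lambda>x. (g x)\<^sup>2) \<longlonglongrightarrow> 0"
    by (rule summable_LIMSEQ_zero) (use g in \<open>simp add: l2_UNIV_iff_summable\<close>)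
  from LIMSEQ_D[OF this, of "1 / 16"] obtain N where N: "\<And>x. x \<ge> N \<Longrightarrow> (g x)\<^sup>2 < 1 / 16"
    by auto
  have "N \<le> 2 ^ Suc N" using less_exp[of "Suc N"] by simp
  then have "(g (2 ^ Suc N))\<^sup>2 < 1 / 16" by (rule N)
  moreover have "1 / 4 \<le> \<bar>g (2 ^ Suc N)\<bar>" using g_spine[of "Suc N"] by simp
  then have "(1 / 4)\<^sup>2 \<le> (g (2 ^ Suc N))\<^sup>2"
    by (metis power2_abs power_mono zero_le_divide_1_iff zero_le_numeral)
  ultimately show False by (simp add: power2_eq_square)
qed

theorem proposition4p8:
  shows "\<exists>(V :: nat set) (E :: nat \<Rightarrow> nat \<Rightarrow> bool).
           simple_tree V E \<and>
           friedrichs_dom V E \<noteq> deg_dom V E \<and>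
           form_dom V E = sqrt_deg_dom V E"
proof (intro exI conjI)
  show "simple_tree UNIV comb.tree_edge"
    by (rule comb.simple_tree_tree_edge)
  show "friedrichs_dom UNIV comb.tree_edge \<noteq> deg_dom UNIV comb.tree_edge"
    using leaf_reciprocal_in_deg_dom leaf_reciprocal_not_in_friedrichs_dom by blast
  show "form_dom UNIV comb.tree_edge = sqrt_deg_dom UNIV comb.tree_edge"
    by (rule comb.form_dom_eq_sqrt_deg_dom)
qed

end
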